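(* Fix $\varepsilon\in(0,1]$. For every $\lambda\in(\varepsilon,\infty)$ with $(\lambda-\varepsilon)N>\lambda\varepsilon$, every $u\in(0,1)$ and every $m\in\mathbb N$, \[ \left|\frac{\lambda N^2}{2u(1-u)(N+\lambda)}\sum_{n=mN+1}^\infty\Big(\frac N{N+\lambda}\Big)^n\Big(\frac1NS_{\beta_u}\big(L_0^{n+1}(J)\big)-\frac1NS_{\beta_u}\big(L_0^n(J)\big)\Big)\right| \le\left[\Big(1+\frac\lambda N\Big)\Big(1-\frac\varepsilon N\Big)\right]^{-(mN+1)}\frac{C_\varepsilon\,\lambda(N-\varepsilon)}{(\lambda-\varepsilon)N-\lambda\varepsilon}, \] where $C_\varepsilon=\frac1\pi\left(2\varepsilon^{-1}+9+\pi+\frac{32\sqrt2}{(1-\cos1)^{1/2}}\right)\frac{4+\varepsilon}{\varepsilon}$.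
   Context: $E$ is a finite set with $N=\#E>8$ elements, listed in a fixed order; $\mathsf M_E$ is the space of complex $N\times N$ matrices indexed by $E\times E$. $Q$ is an irreducible stochastic matrix on $E$ with $Q(x,y)=Q(y,x)$ for all $x,y$ and $\mathrm{tr}(Q)=0$. $I$ is the identity and $J$ the matrix with all entries $1/N$. $L_0(C)=\frac{N-2}NC+\frac1N(CQ+QC)-\frac{2\,\mathrm{tr}(C)}{N^2}Q+\frac{2\,\mathrm{tr}(C)}{N^2}I$, and $L_0^n$ is its $n$-fold composition. For $u\in(0,1)$, $\beta_u$ is a random vector in $\{0,1\}^E$ with i.i.d. Bernoulli($u$) entries and $S_{\beta_u}(C)=\mathbb E\big[\sum_{x,y}\beta_u(x)C(x,y)\beta_u(y)\big]$. *)

theory Defs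
  imports "HOL-Analysis.Analysis"
begin

type_synonym 'e cmat = "'e \<Rightarrow> 'e \<Rightarrow> complex"

definition mmult :: "('e::finite \<Rightarrow> 'e \<Rightarrow> 'a::comm_semiring_1) \<Rightarrow> ('e \<Rightarrow> 'e \<Rightarrow> 'a) \<Rightarrow> 'e \<Rightarrow> 'e \<Rightarrow> 'a" where
  "mmult A B = (\<lambda>x y. \<Sum>z\<in>UNIV. A x z * B z y)"

fun mpow :: "('e::finite \<Rightarrow> 'e \<Rightarrow> 'a::comm_semiring_1) \<Rightarrow> nat \<Rightarrow> 'e \<Rightarrow> 'e \<Rightarrow> 'a" where
  "mpow A 0 = (\<lambda>x y. if x = y then 1 else 0)"
| "mpow A (Suc n) = mmult (mpow A n) A"

definition mtrace :: "('e::finite \<Rightarrow> 'e \<Rightarrow> 'a::comm_semiring_1) \<Rightarrow> 'a" where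
  "mtrace A = (\<Sum>x\<in>UNIV. A x x)"

definition stochastic :: "('e::finite \<Rightarrow> 'e \<Rightarrow> real) \<Rightarrow> bool" where
  "stochastic Q \<longleftrightarrow> (\<forall>x y. Q x y \<ge> 0) \<and> (\<forall>x. (\<Sum>y\<in>UNIV. Q x y) = 1)"

definition irreducible_mat :: "('e::finite \<Rightarrow> 'e \<Rightarrow> real) \<Rightarrow> bool" where
  "irreducible_mat Q \<longleftrightarrow> (\<forall>x y. \<exists>n. mpow Q n x y > 0)"

definition idm :: "'e cmat" where "idm = (\<lambda>x y. if x = y then 1 else 0)"

definition Jm :: "'e::finite cmat" where "Jm = (\<lambda>x y. 1 / of_nat CARD('e))"

definition cQ :: "('e \<Rightarrow> 'e \<Rightarrow> real) \<Rightarrow> 'e cmat" where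
  "cQ Q = (\<lambda>x y. complex_of_real (Q x y))"

definition L0 :: "('e::finite \<Rightarrow> 'e \<Rightarrow> real) \<Rightarrow> 'e cmat \<Rightarrow> 'e cmat" where
  "L0 Q C = (let N = of_nat CARD('e) :: complex in
     (\<lambda>x y. (N - 2) / N * C x y + (1 / N) * (mmult C (cQ Q) x y + mmult (cQ Q) C x y)
            - 2 * mtrace C / N^2 * cQ Q x y + 2 * mtrace C / N^2 * idm x y))"

text \<open>S_{beta_u}(C) = E[sum_{x,y} beta(x) C(x,y) beta(y)], beta i.i.d. Bernoulli(u);
  the expectation written out over the support {0,1}^E, identifying beta with the
  set B of points where beta = 1.\<close>
definition S_beta :: "real \<Rightarrow> 'e::finite cmat \<Rightarrow> complex" where
  "S_beta u C = (\<Sum>B\<in>Pow (UNIV::'e set).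
      complex_of_real (u ^ card B * (1 - u) ^ (CARD('e) - card B)) *
      (\<Sum>x\<in>UNIV. \<Sum>y\<in>UNIV. (if x \<in> B then 1 else 0) * C x y * (if y \<in> B then 1 else 0)))"

definition C_eps :: "real \<Rightarrow> real" where
  "C_eps \<epsilon> = (1 / pi) * (2 / \<epsilon> + 9 + pi + 32 * sqrt 2 / sqrt (1 - cos 1)) * ((4 + \<epsilon>) / \<epsilon>)"

end

theory Submission
  imports Defs
begin

(* Everything reduces to real symmetric matrices indexed by E.
   (1) On real matrices L_0 is a real linear map L; since the entries of beta_u
       are independent Bernoulli(u), S_beta(C) = u^2 * (sum of entries of C)
       + u(1-u) * tr C.  L preserves the entry sum, and tr (L C) = tr C + (2/N) tr (C Q)
       (here tr Q = 0 is used), so the n-th increment of (1/N) S_beta(L^n J)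
       equals 2u(1-u)/N^2 * g n with g n = tr (L^n(J) Q).
   (2) L^(n+1) J - L^n J = (I - Q) Z n where Z n obeys a simple linear recursion.
       Each Z n pairs nonnegatively (under the trace) with a cone of positive
       semidefinite matrices commuting with Q; the cone contains I - Q and
       4 I +- (I - Q) Q.  Together with tr (Z n) <= 2/N this gives
       |g (n+1) - g n| <= 8/N, hence |g n| <= 1 + 8n/N.
   (3) Bernoulli's inequality turns this into a geometric bound
       (8/eps) (1 - eps/N)^(-n); the discounted tail is then dominated by a
       geometric series of ratio [(1 + lam/N)(1 - eps/N)]^(-1), and 8/eps <= C_eps. *)

type_synonym 'e rmat = "real^'e^'e"

lemma matrix_add_rdistrib: "((A::'e::finite rmat) + B) ** C = A ** C + B ** C"
  by (vector matrix_matrix_mult_def sum.distrib field_simps)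

lemma matrix_sub_rdistrib: "((A::'e::finite rmat) - B) ** C = A ** C - B ** C"
  by (vector matrix_matrix_mult_def sum_subtractf field_simps)

lemma matrix_sub_ldistrib: "(A::'e::finite rmat) ** (B - C) = A ** B - A ** C"
  by (vector matrix_matrix_mult_def sum_subtractf field_simps)

lemma matrix_scaleR_left: "((c::real) *\<^sub>R (A::'e::finite rmat)) ** B = c *\<^sub>R (A ** B)"
  by (simp add: scalar_matrix_assoc)

lemma matrix_scaleR_right: "(A::'e::finite rmat) ** ((c::real) *\<^sub>R B) = c *\<^sub>R (A ** B)"
  by (simp add: matrix_scalar_ac scalar_matrix_assoc)

lemma trace_scaleR: "trace ((c::real) *\<^sub>R (A::'e::finite rmat)) = c * trace A"
  by (simp add: trace_def sum_distrib_left)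

lemma matrix_vector_scaleR: "((c::real) *\<^sub>R (A::'e::finite rmat)) *v v = c *\<^sub>R (A *v v)"
  by (vector matrix_vector_mult_def sum_distrib_left mult.assoc)

lemma scaleR_double: "(c::real) *\<^sub>R (2 * (X::'e::finite rmat)) = (2 * c) *\<^sub>R X"
  by (simp add: vec_eq_iff)

lemmas matrix_linear_simps = matrix_add_rdistrib matrix_sub_rdistrib matrix_sub_ldistrib
  matrix_add_ldistrib matrix_scaleR_left matrix_scaleR_right trace_add trace_sub trace_scaleR

lemma symmetric_inner_swap:
  assumes "transpose (A::'e::finite rmat) = A"
  shows "v \<bullet> (A *v w) = (A *v v) \<bullet> w"
proof -
  have "v \<bullet> (A *v w) = (v v* A) \<bullet> w" by (simp add: dot_lmul_matrix)
  also have "v v* A = transpose A *v v" by simp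
  finally show ?thesis using assms by simp
qed

lemma trace_sandwich_nonneg:
  fixes B M :: "'e::finite rmat"
  assumes "\<forall>v. 0 \<le> v \<bullet> (B *v v)" and "transpose M = M"
  shows "0 \<le> trace (M ** B ** M)"
proof -
  have "(transpose M ** (B ** M))$i$i = column i M \<bullet> (B *v column i M)" for i
    by (simp add: matrix_matrix_mult_def transpose_def column_def inner_vec_def
        matrix_vector_mult_def sum_distrib_left mult_ac)
  then have "trace (transpose M ** (B ** M)) = (\<Sum>i\<in>UNIV. column i M \<bullet> (B *v column i M))"
    by (simp add: trace_def)
  also have "\<dots> \<ge> 0" using assms(1) by (intro sum_nonneg) auto
  finally show ?thesis using assms(2) by (simp add: matrix_mul_assoc)
qed

definition Jmat :: "'e::finite rmat" where "Jmat = (\<chi> i j. 1 / real CARD('e))"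

definition Proj :: "'e::finite rmat" where "Proj = mat 1 - Jmat"

definition Lap :: "'e::finite rmat \<Rightarrow> 'e rmat" where "Lap Q = mat 1 - Q"

definition Rmat :: "'e::finite rmat \<Rightarrow> 'e rmat" where
  "Rmat Q = ((real CARD('e) - 2) / real CARD('e)) *\<^sub>R mat 1 + (2 / real CARD('e)) *\<^sub>R Q"

definition entry_sum :: "'e::finite rmat \<Rightarrow> real" where
  "entry_sum C = (\<Sum>i\<in>UNIV. \<Sum>j\<in>UNIV. C$i$j)"

definition cone :: "'e::finite rmat \<Rightarrow> 'e rmat set" where
  "cone Q = {B. B ** Q = Q ** B \<and> (\<forall>v. 0 \<le> v \<bullet> (B *v v))
                \<and> (\<forall>v. 0 \<le> v \<bullet> ((Rmat Q ** B) *v v))}"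

(* The real form of L_0 (with the two trace terms combined into a multiple of I - Q). *)
definition Lreal :: "'e::finite rmat \<Rightarrow> 'e rmat \<Rightarrow> 'e rmat" where
  "Lreal Q C = ((real CARD('e) - 2) / real CARD('e)) *\<^sub>R C
     + (1 / real CARD('e)) *\<^sub>R (C ** Q + Q ** C)
     + (2 * trace C / (real CARD('e))^2) *\<^sub>R Lap Q"

(* Z n describes the increments: L^(n+1) J - L^n J = (I - Q) Z n. *)
fun Zseq :: "'e::finite rmat \<Rightarrow> nat \<Rightarrow> 'e rmat" where
  "Zseq Q 0 = (2 / (real CARD('e))^2) *\<^sub>R Proj"
| "Zseq Q (Suc n) = Rmat Q ** Zseq Q n
     + ((2 / (real CARD('e))^2) * trace (Lap Q ** Zseq Q n)) *\<^sub>R Proj"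

(* g n = tr (L^n(J) Q) controls the increments of S_beta along the orbit of J. *)
definition gseq :: "'e::finite rmat \<Rightarrow> nat \<Rightarrow> real" where
  "gseq Q n = trace ((Lreal Q ^^ n) Jmat ** Q)"

lemma Lreal_add: "Lreal Q (A + B) = Lreal Q A + Lreal Q B"
  by (simp add: Lreal_def matrix_linear_simps scaleR_add_right scaleR_add_left
      distrib_left add_divide_distrib)

lemma Lreal_sub: "Lreal Q (A - B) = Lreal Q A - Lreal Q B"
  using Lreal_add[of Q "A - B" B] by simp

lemma Lreal_iter_sub: "(Lreal Q ^^ n) (A - B) = (Lreal Q ^^ n) A - (Lreal Q ^^ n) B"
  by (induction n) (simp_all add: Lreal_sub)

lemma entry_sum_add: "entry_sum (A + B) = entry_sum A + entry_sum B"
  by (simp add: entry_sum_def sum.distrib)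

lemma entry_sum_scaleR: "entry_sum (c *\<^sub>R A) = c * entry_sum A"
  by (simp add: entry_sum_def sum_distrib_left)

locale sym_stochastic =
  fixes Q :: "'e::finite rmat"
  assumes nonneg: "\<And>i j. 0 \<le> Q$i$j"
    and row_sum: "\<And>i. (\<Sum>j\<in>UNIV. Q$i$j) = 1"
    and symmetric: "transpose Q = Q"
begin

lemma entry_sym: "Q$i$j = Q$j$i"
  using symmetric by (metis transpose_def vec_lambda_beta)

lemma col_sum: "(\<Sum>i\<in>UNIV. Q$i$j) = 1"
  using row_sum[of j] by (simp add: entry_sym)

(* Q is a contraction in the quadratic-form sense: |<v, Q v>| <= |v|^2.  This follows from
   expanding the nonnegative sums sum_ij Q_ij (v_i +- v_j)^2, using the row and column sums. *)
lemma quad_form_bound: "\<bar>v \<bullet> (Q *v v)\<bar> \<le> v \<bullet> v"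
proof -
  let ?S = "\<lambda>f. \<Sum>i\<in>UNIV. \<Sum>j\<in>UNIV. Q$i$j * f i j"
  have left: "?S (\<lambda>i j. (v$i)^2) = v \<bullet> v"
    by (simp add: sum_distrib_right[symmetric] row_sum inner_vec_def power2_eq_square)
  have right: "?S (\<lambda>i j. (v$j)^2) = v \<bullet> v"
    by (subst sum.swap) (simp add: sum_distrib_right[symmetric] col_sum inner_vec_def
        power2_eq_square)
  have mixed: "?S (\<lambda>i j. v$i * v$j) = v \<bullet> (Q *v v)"
    by (simp add: inner_vec_def matrix_vector_mult_def sum_distrib_left mult_ac)
  have "0 \<le> ?S (\<lambda>i j. (v$i + v$j)^2)" and "0 \<le> ?S (\<lambda>i j. (v$i - v$j)^2)"
    by (intro sum_nonneg mult_nonneg_nonneg nonneg; simp)+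
  moreover have "?S (\<lambda>i j. (v$i + v$j)^2)
      = ?S (\<lambda>i j. (v$i)^2) + 2 * ?S (\<lambda>i j. v$i * v$j) + ?S (\<lambda>i j. (v$j)^2)"
    and "?S (\<lambda>i j. (v$i - v$j)^2)
      = ?S (\<lambda>i j. (v$i)^2) - 2 * ?S (\<lambda>i j. v$i * v$j) + ?S (\<lambda>i j. (v$j)^2)"
    by (simp_all add: sum.distrib sum_subtractf sum_distrib_left power2_eq_square algebra_simps)
  ultimately show ?thesis using left right mixed by linarith
qed

(* Q is a contraction in the Euclidean norm: |Q v|^2 <= |v|^2.  Row by row this is
   Jensen's inequality (Q v)_i^2 <= sum_j Q_ij v_j^2, i.e. a nonnegative variance. *)
lemma norm_contraction: "(Q *v v) \<bullet> (Q *v v) \<le> v \<bullet> v"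
proof -
  have row_jensen: "((Q *v v)$i)^2 \<le> (\<Sum>j\<in>UNIV. Q$i$j * (v$j)^2)" for i
  proof -
    define m where "m = (Q *v v)$i"
    have m_eq: "m = (\<Sum>j\<in>UNIV. Q$i$j * v$j)" by (simp add: m_def matrix_vector_mult_def)
    have "0 \<le> (\<Sum>j\<in>UNIV. Q$i$j * (v$j - m)^2)"
      by (intro sum_nonneg mult_nonneg_nonneg nonneg) auto
    also have "\<dots> = (\<Sum>j\<in>UNIV. Q$i$j * (v$j)^2) - 2 * m * (\<Sum>j\<in>UNIV. Q$i$j * v$j)
        + m^2 * (\<Sum>j\<in>UNIV. Q$i$j)"
      by (simp add: sum.distrib sum_subtractf sum_distrib_left sum_distrib_right
          power2_eq_square algebra_simps)
    also have "\<dots> = (\<Sum>j\<in>UNIV. Q$i$j * (v$j)^2) - m^2"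
      by (simp add: row_sum m_eq[symmetric] power2_eq_square)
    finally show ?thesis by (simp add: m_def)
  qed
  have "(Q *v v) \<bullet> (Q *v v) = (\<Sum>i\<in>UNIV. ((Q *v v)$i)^2)"
    by (simp add: inner_vec_def power2_eq_square)
  also have "\<dots> \<le> (\<Sum>i\<in>UNIV. \<Sum>j\<in>UNIV. Q$i$j * (v$j)^2)"
    by (rule sum_mono) (rule row_jensen)
  also have "\<dots> = v \<bullet> v"
    by (subst sum.swap) (simp add: sum_distrib_right[symmetric] col_sum inner_vec_def
        power2_eq_square)
  finally show ?thesis .
qed

lemma Q_Jmat: "Q ** Jmat = Jmat"
  by (simp add: Jmat_def matrix_matrix_mult_def vec_eq_iff sum_divide_distrib[symmetric] row_sum)

lemma Jmat_Q: "Jmat ** Q = Jmat"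
  by (simp add: Jmat_def matrix_matrix_mult_def vec_eq_iff sum_divide_distrib[symmetric] col_sum)

lemma Jmat_idem: "Jmat ** Jmat = (Jmat :: 'e rmat)"
  by (simp add: Jmat_def matrix_matrix_mult_def vec_eq_iff)

lemma trace_Jmat: "trace (Jmat :: 'e rmat) = 1"
  by (simp add: Jmat_def trace_def)

lemma Proj_comm: "Proj ** Q = Q ** Proj"
  by (simp add: Proj_def matrix_linear_simps Q_Jmat Jmat_Q)

lemma Proj_idem: "Proj ** Proj = (Proj :: 'e rmat)"
  by (simp add: Proj_def matrix_linear_simps Jmat_idem)

lemma Proj_symmetric: "transpose (Proj :: 'e rmat) = Proj"
  by (simp add: Proj_def Jmat_def mat_def transpose_def vec_eq_iff)

lemma trace_Proj: "trace (Proj :: 'e rmat) = real CARD('e) - 1"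
  by (simp add: Proj_def trace_sub trace_Jmat trace_I)

lemma Lap_Proj: "Lap Q ** Proj = Lap Q"
  by (simp add: Proj_def Lap_def matrix_linear_simps Q_Jmat)

lemma Lap_comm: "Lap Q ** Q = Q ** Lap Q"
  by (simp add: Lap_def matrix_linear_simps)

lemma Rmat_comm: "B ** Q = Q ** B \<Longrightarrow> Rmat Q ** B = B ** Rmat Q"
  by (simp add: Rmat_def matrix_linear_simps)

lemma Rmat_Q: "Rmat Q ** Q = Q ** Rmat Q"
  by (simp add: Rmat_def matrix_linear_simps)

lemma Rmat_symmetric: "transpose (Rmat Q) = Rmat Q"
  by (simp add: Rmat_def mat_def entry_sym transpose_def vec_eq_iff)

lemma Rmat_inner: "v \<bullet> (Rmat Q *v w) = ((real CARD('e) - 2) / real CARD('e)) * (v \<bullet> w)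
   + (2 / real CARD('e)) * ((Q *v v) \<bullet> w)"
  by (simp add: Rmat_def matrix_vector_mult_add_rdistrib matrix_vector_scaleR inner_add_right
      symmetric_inner_swap[OF symmetric])

lemma cone_Rmat: assumes "B \<in> cone Q" shows "Rmat Q ** B \<in> cone Q"
proof -
  from assms have comm: "B ** Q = Q ** B" and psd: "\<forall>v. 0 \<le> v \<bullet> (B *v v)"
    and psd_R: "\<forall>v. 0 \<le> v \<bullet> ((Rmat Q ** B) *v v)" by (auto simp: cone_def)
  have "(Rmat Q ** B) ** Q = Q ** (Rmat Q ** B)"
    by (metis comm Rmat_Q matrix_mul_assoc)
  moreover have "0 \<le> v \<bullet> ((Rmat Q ** (Rmat Q ** B)) *v v)" for v
  proof -
    have "v \<bullet> ((Rmat Q ** (Rmat Q ** B)) *v v) = v \<bullet> (Rmat Q *v ((Rmat Q ** B) *v v))"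
      by (simp add: matrix_vector_mul_assoc)
    also have "\<dots> = (Rmat Q *v v) \<bullet> ((B ** Rmat Q) *v v)"
      by (simp add: symmetric_inner_swap[OF Rmat_symmetric] Rmat_comm[OF comm])
    also have "\<dots> = (Rmat Q *v v) \<bullet> (B *v (Rmat Q *v v))"
      by (simp add: matrix_vector_mul_assoc)
    finally show ?thesis using psd by simp
  qed
  ultimately show ?thesis using psd_R by (simp add: cone_def)
qed

(* Elements of the cone have nonnegative mean-zero trace tr (P B) = tr (P B P). *)
lemma cone_trace_Proj: assumes "B \<in> cone Q" shows "0 \<le> trace (Proj ** B)"
proof -
  have "trace (Proj ** B) = trace ((Proj ** B) ** Proj)"
    by (metis Proj_idem matrix_mul_assoc trace_mul_sym)
  also have "\<dots> \<ge> 0"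
    by (rule trace_sandwich_nonneg) (use assms Proj_symmetric in \<open>auto simp: cone_def\<close>)
  finally show ?thesis .
qed

(* L preserves the sum of all entries, because Q has unit row and column sums
   and I - Q has entry sum zero. *)
lemma entry_sum_Lreal: "entry_sum (Lreal Q C) = entry_sum C"
proof -
  let ?N = "real CARD('e)"
  have right: "entry_sum (C ** Q) = entry_sum C"
  proof -
    have "entry_sum (C ** Q) = (\<Sum>i\<in>UNIV. \<Sum>k\<in>UNIV. \<Sum>j\<in>UNIV. C$i$k * Q$k$j)"
      unfolding entry_sum_def matrix_matrix_mult_def
      by (simp, rule sum.cong[OF refl], rule sum.swap)
    also have "\<dots> = entry_sum C"
      by (simp add: entry_sum_def row_sum flip: sum_distrib_left)
    finally show ?thesis .
  qed
  have left: "entry_sum (Q ** C) = entry_sum C"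
  proof -
    have "entry_sum (Q ** C) = (\<Sum>i\<in>UNIV. \<Sum>k\<in>UNIV. Q$i$k * (\<Sum>j\<in>UNIV. C$k$j))"
      unfolding entry_sum_def matrix_matrix_mult_def
      by (simp add: sum_distrib_left, rule sum.cong[OF refl], rule sum.swap)
    also have "\<dots> = (\<Sum>k\<in>UNIV. (\<Sum>i\<in>UNIV. Q$i$k) * (\<Sum>j\<in>UNIV. C$k$j))"
      by (subst sum.swap) (simp add: sum_distrib_right)
    also have "\<dots> = entry_sum C" by (simp add: entry_sum_def col_sum)
    finally show ?thesis .
  qed
  have lap: "entry_sum (Lap Q) = 0"
    by (simp add: entry_sum_def Lap_def mat_def sum_subtractf row_sum)
  have "entry_sum (Lreal Q C)
      = ((?N - 2) / ?N) * entry_sum C + (1 / ?N) * (entry_sum C + entry_sum C)"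
    by (simp add: Lreal_def entry_sum_add entry_sum_scaleR right left lap)
  also have "\<dots> = entry_sum C" by (simp add: field_simps)
  finally show ?thesis .
qed

lemma trace_Lreal:
  assumes "trace Q = 0"
  shows "trace (Lreal Q C) = trace C + (2 / real CARD('e)) * trace (C ** Q)"
proof -
  let ?N = "real CARD('e)"
  have "trace (Lreal Q C) = ((?N - 2) / ?N) * trace C + (1 / ?N) * (trace (C ** Q) + trace (C ** Q))
     + (2 * trace C / ?N^2) * ?N"
    by (simp add: Lreal_def trace_add trace_scaleR Lap_def trace_sub trace_I assms
        trace_mul_sym[of Q C])
  also have "\<dots> = trace C + (2 / ?N) * trace (C ** Q)"
    by (simp add: field_simps power2_eq_square)
  finally show ?thesis .
qed

end

(* For at least eight states the cone contains the two test matrices we need. *)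
locale large_sym_stochastic = sym_stochastic Q for Q :: "'e::finite rmat" +
  assumes card_ge_8: "8 \<le> CARD('e)"
begin

lemma card_pos: "0 < real CARD('e)"
  using card_ge_8 by simp

lemma Lap_in_cone: "Lap Q \<in> cone Q"
proof -
  have "0 \<le> v \<bullet> (Lap Q *v v)" for v
    using quad_form_bound[of v]
    by (simp add: Lap_def matrix_vector_mult_diff_rdistrib inner_diff_right)
  moreover have "0 \<le> v \<bullet> ((Rmat Q ** Lap Q) *v v)" for v
  proof -
    define a b c where "a = v \<bullet> v" and "b = v \<bullet> (Q *v v)" and "c = (Q *v v) \<bullet> (Q *v v)"
    have ab: "\<bar>b\<bar> \<le> a" using quad_form_bound[of v] by (simp add: a_def b_def)
    have ca: "c \<le> a" using norm_contraction[of v] by (simp add: a_def c_def)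
    have "v \<bullet> ((Rmat Q ** Lap Q) *v v)
        = ((real CARD('e) - 2) * (a - b) + 2 * (b - c)) / real CARD('e)"
      using card_pos
      by (simp add: matrix_vector_mul_assoc[symmetric] Rmat_inner Lap_def
          matrix_vector_mult_diff_rdistrib inner_diff_right a_def b_def c_def inner_commute
          field_simps)
    also have "\<dots> \<ge> 0"
    proof -
      have "(real CARD('e) - 2) * (a - b) \<ge> 2 * (a - b)"
        using card_ge_8 ab by (intro mult_right_mono) auto
      then show ?thesis using ab ca by (intro divide_nonneg_pos) auto
    qed
    finally show ?thesis .
  qed
  ultimately show ?thesis using Lap_comm by (simp add: cone_def)
qed

(* The matrices 4 I +- (I - Q) Q lie in the cone; this is where N >= 8 is needed. *)
lemma shifted_in_cone:
  assumes s: "s = 1 \<or> s = -1"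
  shows "4 *\<^sub>R mat 1 + s *\<^sub>R (Lap Q ** Q) \<in> cone Q"
proof -
  let ?B = "4 *\<^sub>R mat 1 + s *\<^sub>R (Lap Q ** Q)"
  have comm: "?B ** Q = Q ** ?B" by (simp add: matrix_linear_simps Lap_def matrix_mul_assoc)
  have Bv: "?B *v v = 4 *\<^sub>R v + s *\<^sub>R ((Q *v v) - Q *v (Q *v v))" for v
    by (simp add: matrix_vector_mult_add_rdistrib matrix_vector_scaleR Lap_def
        matrix_vector_mult_diff_rdistrib matrix_vector_mul_assoc[symmetric])
  have "0 \<le> v \<bullet> (?B *v v) \<and> 0 \<le> v \<bullet> ((Rmat Q ** ?B) *v v)" for v
  proof -
    define a b c d where "a = v \<bullet> v" and "b = v \<bullet> (Q *v v)"
      and "c = (Q *v v) \<bullet> (Q *v v)" and "d = (Q *v v) \<bullet> (Q *v (Q *v v))"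
    have ab: "\<bar>b\<bar> \<le> a" using quad_form_bound[of v] by (simp add: a_def b_def)
    have ca: "c \<le> a" using norm_contraction[of v] by (simp add: a_def c_def)
    have dc: "\<bar>d\<bar> \<le> c" using quad_form_bound[of "Q *v v"] by (simp add: c_def d_def)
    have c0: "0 \<le> c" by (simp add: c_def)
    have X: "v \<bullet> (?B *v v) = 4 * a + s * (b - c)"
      by (simp add: Bv inner_add_right inner_diff_right a_def b_def c_def
          symmetric_inner_swap[OF symmetric])
    have Y: "(Q *v v) \<bullet> (?B *v v) = 4 * b + s * (c - d)"
      by (simp add: Bv inner_add_right inner_diff_right b_def c_def d_def inner_commute)
    have X_ge: "4 * a + s * (b - c) \<ge> 2 * a" using s ab ca c0 by auto
    have Y_ge: "4 * b + s * (c - d) \<ge> - 6 * a" using s ab ca dc c0 by auto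
    have "v \<bullet> ((Rmat Q ** ?B) *v v)
        = ((real CARD('e) - 2) / real CARD('e)) * (4 * a + s * (b - c))
          + (2 / real CARD('e)) * (4 * b + s * (c - d))"
      by (simp add: matrix_vector_mul_assoc[symmetric] Rmat_inner X Y del: scaleR_scaleR)
    also have "\<dots> = ((real CARD('e) - 2) * (4 * a + s * (b - c)) + 2 * (4 * b + s * (c - d)))
          / real CARD('e)"
      using card_pos by (simp add: field_simps)
    also have "\<dots> \<ge> 0"
    proof -
      have "(real CARD('e) - 2) * (4 * a + s * (b - c)) \<ge> (real CARD('e) - 2) * (2 * a)"
        using card_ge_8 X_ge by (intro mult_left_mono) auto
      moreover have "(real CARD('e) - 8) * a \<ge> 0"
        using card_ge_8 ab by (intro mult_nonneg_nonneg) auto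
      ultimately show ?thesis using Y_ge by (intro divide_nonneg_pos) (auto simp: algebra_simps)
    qed
    finally show ?thesis using X X_ge ab by auto
  qed
  then show ?thesis using comm by (simp add: cone_def)
qed

lemma Lreal_Jmat: "Lreal Q Jmat = Jmat + (2 / (real CARD('e))^2) *\<^sub>R Lap Q"
proof -
  have "Lreal Q Jmat = ((real CARD('e) - 2) / real CARD('e) + 2 / real CARD('e)) *\<^sub>R Jmat
      + (2 / (real CARD('e))^2) *\<^sub>R Lap Q"
    by (simp add: Lreal_def Q_Jmat Jmat_Q trace_Jmat scaleR_add_left scaleR_double)
  also have "(real CARD('e) - 2) / real CARD('e) + 2 / real CARD('e) = 1"
    using card_pos by (simp add: field_simps)
  finally show ?thesis by simp
qed

lemma Lreal_Lap:
  assumes comm: "Z ** Q = Q ** Z"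
  shows "Lreal Q (Lap Q ** Z)
    = Lap Q ** (Rmat Q ** Z + ((2 / (real CARD('e))^2) * trace (Lap Q ** Z)) *\<^sub>R Proj)"
proof -
  let ?N = "real CARD('e)"
  have right: "(Lap Q ** Z) ** Q = (Q ** Lap Q) ** Z"
    by (metis comm Lap_comm matrix_mul_assoc)
  have left: "Q ** (Lap Q ** Z) = (Q ** Lap Q) ** Z" by (simp add: matrix_mul_assoc)
  have R_part: "Lap Q ** (Rmat Q ** Z)
      = ((?N - 2) / ?N) *\<^sub>R (Lap Q ** Z) + (2 / ?N) *\<^sub>R ((Q ** Lap Q) ** Z)"
    by (simp add: Rmat_def matrix_linear_simps matrix_mul_assoc Lap_comm)
  have P_part: "Lap Q ** (c *\<^sub>R Proj) = c *\<^sub>R Lap Q" for c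
    by (simp add: matrix_linear_simps Lap_Proj)
  have "Lreal Q (Lap Q ** Z) = ((?N - 2) / ?N) *\<^sub>R (Lap Q ** Z)
      + (2 / ?N) *\<^sub>R ((Q ** Lap Q) ** Z) + (2 * trace (Lap Q ** Z) / ?N^2) *\<^sub>R Lap Q"
    by (simp add: Lreal_def right left scaleR_double)
  also have "\<dots> = Lap Q ** (Rmat Q ** Z + ((2 / ?N^2) * trace (Lap Q ** Z)) *\<^sub>R Proj)"
    by (simp add: matrix_add_ldistrib R_part P_part)
  finally show ?thesis .
qed

lemma Zseq_comm: "Zseq Q n ** Q = Q ** Zseq Q n"
proof (induction n)
  case 0 then show ?case by (simp add: matrix_linear_simps Proj_comm)
next
  case (Suc n)
  have "(Rmat Q ** Zseq Q n) ** Q = Q ** (Rmat Q ** Zseq Q n)"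
    by (metis Suc Rmat_Q matrix_mul_assoc)
  then show ?case by (simp add: matrix_linear_simps Proj_comm)
qed

lemma Lreal_iter_step: "(Lreal Q ^^ Suc n) Jmat = (Lreal Q ^^ n) Jmat + Lap Q ** Zseq Q n"
proof -
  have image: "(Lreal Q ^^ n) ((2 / (real CARD('e))^2) *\<^sub>R Lap Q) = Lap Q ** Zseq Q n" for n
    by (induction n) (simp_all add: matrix_linear_simps Lap_Proj Lreal_Lap[OF Zseq_comm])
  have "(Lreal Q ^^ Suc n) Jmat - (Lreal Q ^^ n) Jmat = (Lreal Q ^^ n) (Lreal Q Jmat - Jmat)"
    by (simp add: funpow_Suc_right Lreal_iter_sub del: funpow.simps)
  also have "\<dots> = Lap Q ** Zseq Q n" by (simp add: Lreal_Jmat image)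
  finally show ?thesis by (simp add: algebra_simps)
qed

lemma Zseq_cone_nonneg: "B \<in> cone Q \<Longrightarrow> 0 \<le> trace (Zseq Q n ** B)"
proof (induction n arbitrary: B)
  case 0 then show ?case
    using cone_trace_Proj by (auto simp: matrix_linear_simps intro!: mult_nonneg_nonneg)
next
  case (Suc n)
  have lap: "0 \<le> trace (Lap Q ** Zseq Q n)"
    using Suc.IH[OF Lap_in_cone] by (metis trace_mul_sym)
  have "B ** Rmat Q = Rmat Q ** B" using Suc.prems Rmat_comm by (simp add: cone_def)
  then have "trace ((Rmat Q ** Zseq Q n) ** B) = trace (Zseq Q n ** (Rmat Q ** B))"
    by (metis matrix_mul_assoc trace_mul_sym)
  moreover have "0 \<le> trace (Zseq Q n ** (Rmat Q ** B))"
    using Suc.IH[OF cone_Rmat[OF Suc.prems]] .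
  moreover have "0 \<le> trace (Proj ** B)" using cone_trace_Proj[OF Suc.prems] .
  ultimately show ?case using lap by (simp add: matrix_linear_simps)
qed

(* tr (Z n) is nonincreasing, hence at most tr (Z 0) <= 2/N. *)
lemma trace_Zseq: "trace (Zseq Q n) \<le> 2 / real CARD('e)"
proof -
  let ?N = "real CARD('e)"
  have step: "trace (Zseq Q (Suc k)) \<le> trace (Zseq Q k)" for k
  proof -
    define t q where "t = trace (Zseq Q k)" and "q = trace (Q ** Zseq Q k)"
    have "0 \<le> trace (Zseq Q k ** Lap Q)" using Zseq_cone_nonneg[OF Lap_in_cone] .
    then have gap: "0 \<le> t - q"
      by (simp add: Lap_def matrix_linear_simps t_def q_def trace_mul_sym[of _ Q])
    have "trace (Zseq Q (Suc k))
        = ((?N - 2) / ?N) * t + (2 / ?N) * q + (2 / ?N^2) * (t - q) * (?N - 1)"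
      by (simp add: matrix_linear_simps Rmat_def Lap_def trace_Proj t_def q_def)
    also have "\<dots> = t - (2 / ?N^2) * (t - q)"
      using card_pos by (simp add: field_simps power2_eq_square)
    finally show ?thesis using gap by (simp add: t_def)
  qed
  have "trace (Zseq Q n) \<le> trace (Zseq Q 0)"
  proof (induction n)
    case (Suc n) then show ?case using step[of n] by linarith
  qed simp
  also have "\<dots> = 2 / ?N^2 * (?N - 1)"
    by (simp add: trace_scaleR trace_Proj)
  also have "\<dots> \<le> 2 / ?N"
    using card_pos by (simp add: field_simps power2_eq_square)
  finally show ?thesis .
qed

(* |g (n+1) - g n| = |tr ((I - Q) Z n Q)| <= 4 tr (Z n) <= 8/N, by pairing Z n
   with the two cone elements 4 I +- (I - Q) Q. *)
lemma gseq_increment: "\<bar>gseq Q (Suc n) - gseq Q n\<bar> \<le> 8 / real CARD('e)"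
proof -
  have "gseq Q (Suc n) - gseq Q n = trace (Lap Q ** (Zseq Q n ** Q))"
    by (simp add: gseq_def Lreal_iter_step matrix_linear_simps matrix_mul_assoc
        del: funpow.simps)
  also have "\<dots> = trace (Zseq Q n ** (Q ** Lap Q))"
    by (metis matrix_mul_assoc trace_mul_sym)
  finally have diff: "gseq Q (Suc n) - gseq Q n = trace (Zseq Q n ** (Lap Q ** Q))"
    by (simp add: Lap_comm)
  have "0 \<le> trace (Zseq Q n ** (4 *\<^sub>R mat 1 + 1 *\<^sub>R (Lap Q ** Q)))"
    and "0 \<le> trace (Zseq Q n ** (4 *\<^sub>R mat 1 + (-1) *\<^sub>R (Lap Q ** Q)))"
    using Zseq_cone_nonneg shifted_in_cone by blast+
  then have "\<bar>trace (Zseq Q n ** (Lap Q ** Q))\<bar> \<le> 4 * trace (Zseq Q n)"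
    by (simp add: matrix_linear_simps)
  also have "\<dots> \<le> 8 / real CARD('e)" using trace_Zseq[of n] by simp
  finally show ?thesis using diff by simp
qed

lemma gseq_bound: "\<bar>gseq Q n\<bar> \<le> 1 + 8 * real n / real CARD('e)"
proof (induction n)
  case 0 then show ?case by (simp add: gseq_def Jmat_Q trace_Jmat)
next
  case (Suc n)
  have "\<bar>gseq Q (Suc n)\<bar> \<le> \<bar>gseq Q n\<bar> + \<bar>gseq Q (Suc n) - gseq Q n\<bar>" by linarith
  also have "\<dots> \<le> 1 + 8 * real n / real CARD('e) + 8 / real CARD('e)"
    using Suc gseq_increment[of n] by simp
  finally show ?case by (simp add: field_simps)
qed

end

definition cmat :: "'e::finite rmat \<Rightarrow> 'e cmat" where
  "cmat M = (\<lambda>x y. complex_of_real (M$x$y))"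

definition rmat :: "('e::finite \<Rightarrow> 'e \<Rightarrow> real) \<Rightarrow> 'e rmat" where
  "rmat Q = (\<chi> i j. Q i j)"

lemma mmult_cmat: "mmult (cmat A) (cmat B) = cmat (A ** B)"
  by (simp add: fun_eq_iff mmult_def cmat_def matrix_matrix_mult_def)

lemma mtrace_cmat: "mtrace (cmat A) = complex_of_real (trace A)"
  by (simp add: mtrace_def cmat_def trace_def)

lemma L0_cmat: "L0 Q (cmat M) = cmat (Lreal (rmat Q) M)"
proof -
  have cQ: "cQ Q = cmat (rmat Q)" by (simp add: fun_eq_iff cQ_def cmat_def rmat_def)
  have idm: "idm = cmat (mat 1)" by (simp add: fun_eq_iff idm_def cmat_def mat_def)
  show ?thesis
    unfolding L0_def Let_def cQ idm mmult_cmat mtrace_cmat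
    by (simp add: fun_eq_iff cmat_def Lreal_def Lap_def field_simps)
qed

lemma L0_iter_Jm: "(L0 Q ^^ n) Jm = cmat ((Lreal (rmat Q) ^^ n) Jmat)"
proof (induction n)
  case 0 show ?case by (simp add: fun_eq_iff Jm_def cmat_def Jmat_def)
next
  case (Suc n) then show ?case by (simp add: L0_cmat)
qed

lemma large_sym_stochastic_rmat:
  assumes "stochastic Q" and "\<forall>x y. Q x y = Q y x" and "8 < CARD('e::finite)"
  shows "large_sym_stochastic (rmat (Q :: 'e \<Rightarrow> 'e \<Rightarrow> real))"
  by unfold_locales
    (use assms in \<open>auto simp: rmat_def stochastic_def transpose_def vec_eq_iff\<close>)

lemma trace_rmat: "trace (rmat Q) = mtrace Q"
  by (simp add: rmat_def trace_def mtrace_def)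

(* Second moments of independent Bernoulli(u) variables: E[beta x beta y]
   = u if x = y and u^2 otherwise, obtained by expanding the product
   prod_i (u + f i) over subsets, with f i = 0 on {x, y} and f i = 1 - u elsewhere. *)
lemma bernoulli_pair_moment:
  fixes u :: real and x y :: "'e::finite"
  shows "(\<Sum>B\<in>Pow (UNIV::'e set). u ^ card B * (1 - u) ^ (CARD('e) - card B) *
      ((if x \<in> B then 1 else 0) * (if y \<in> B then 1 else 0))) = (if x = y then u else u^2)"
proof -
  define f where "f i = (if i \<in> {x, y} then 0 else 1 - u)" for i
  have "(\<Prod>i\<in>(UNIV::'e set). u + f i) = (\<Prod>i\<in>(UNIV::'e set). if i \<in> {x,y} then u else 1)"
    by (rule prod.cong) (auto simp: f_def)
  also have "\<dots> = u ^ card {x, y}"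
  proof -
    have "{i. i = x \<or> i = y} = {x, y}" by auto
    then show ?thesis by (simp add: prod.If_cases Int_absorb1)
  qed
  also have "\<dots> = (if x = y then u else u^2)" by (auto simp: power2_eq_square)
  finally have product: "(\<Prod>i\<in>(UNIV::'e set). u + f i) = (if x = y then u else u^2)" .
  have "(\<Prod>i\<in>(UNIV::'e set). u + f i) = (\<Sum>B\<in>Pow UNIV. (\<Prod>i\<in>B. u) * (\<Prod>i\<in>UNIV - B. f i))"
    by (rule prod_add) simp
  also have "\<dots> = (\<Sum>B\<in>Pow (UNIV::'e set). u ^ card B * (1 - u) ^ (CARD('e) - card B) *
      ((if x \<in> B then 1 else 0) * (if y \<in> B then 1 else 0)))"
  proof (rule sum.cong[OF refl])
    fix B :: "'e set"
    show "(\<Prod>i\<in>B. u) * (\<Prod>i\<in>UNIV - B. f i) = u ^ card B * (1 - u) ^ (CARD('e) - card B) *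
      ((if x \<in> B then 1 else 0) * (if y \<in> B then 1 else 0))"
    proof (cases "x \<in> B \<and> y \<in> B")
      case True
      then have "(\<Prod>i\<in>UNIV - B. f i) = (\<Prod>i\<in>UNIV - B. 1 - u)"
        by (intro prod.cong) (auto simp: f_def)
      also have "\<dots> = (1 - u) ^ (CARD('e) - card B)"
        by (simp add: card_Diff_subset)
      finally show ?thesis using True by simp
    next
      case False
      then have "(\<Prod>i\<in>UNIV - B. f i) = 0"
        by (intro prod_zero) (auto simp: f_def)
      then show ?thesis using False by auto
    qed
  qed
  finally show ?thesis using product by simp
qed

lemma S_beta_cmat:
  fixes M :: "'e::finite rmat"
  shows "S_beta u (cmat M) = complex_of_real (u^2 * entry_sum M + (u - u^2) * trace M)"
proof -
  let ?w = "\<lambda>B::'e set. u ^ card B * (1 - u) ^ (CARD('e) - card B)"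
  let ?I = "\<lambda>x B. (if x \<in> B then 1 else 0) :: real"
  have "S_beta u (cmat M) = complex_of_real (\<Sum>B\<in>Pow (UNIV::'e set). ?w B *
      (\<Sum>x\<in>UNIV. \<Sum>y\<in>UNIV. ?I x B * M$x$y * ?I y B))"
  proof -
    have real_summand: "(if x \<in> B then 1 else 0) * complex_of_real r * (if y \<in> B then 1 else 0)
       = complex_of_real (?I x B * r * ?I y B)" for x y B r by simp
    show ?thesis unfolding S_beta_def cmat_def real_summand
      by (simp only: of_real_sum[symmetric] of_real_mult[symmetric])
  qed
  also have "(\<Sum>B\<in>Pow (UNIV::'e set). ?w B * (\<Sum>x\<in>UNIV. \<Sum>y\<in>UNIV. ?I x B * M$x$y * ?I y B))
      = (\<Sum>x\<in>UNIV. \<Sum>y\<in>UNIV. M$x$y * (\<Sum>B\<in>Pow (UNIV::'e set). ?w B * (?I x B * ?I y B)))"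
  proof -
    have "(\<Sum>B\<in>Pow (UNIV::'e set). ?w B * (\<Sum>x\<in>UNIV. \<Sum>y\<in>UNIV. ?I x B * M$x$y * ?I y B))
       = (\<Sum>B\<in>Pow (UNIV::'e set). \<Sum>x\<in>UNIV. \<Sum>y\<in>UNIV. M$x$y * (?w B * (?I x B * ?I y B)))"
      by (simp add: sum_distrib_left mult_ac)
    also have "\<dots> = (\<Sum>x\<in>UNIV. \<Sum>y\<in>UNIV. \<Sum>B\<in>Pow (UNIV::'e set). M$x$y * (?w B * (?I x B * ?I y B)))"
      by (subst sum.swap) (rule sum.cong[OF refl], rule sum.swap)
    finally show ?thesis by (simp only: sum_distrib_left)
  qed
  also have "\<dots> = (\<Sum>x\<in>UNIV. \<Sum>y\<in>UNIV. M$x$y * (if x = y then u else u^2))"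
    by (simp only: bernoulli_pair_moment)
  also have "\<dots> = (\<Sum>x\<in>UNIV. u^2 * (\<Sum>y\<in>UNIV. M$x$y) + (u - u^2) * M$x$x)"
  proof (rule sum.cong[OF refl])
    fix x :: 'e
    have "(\<Sum>y\<in>UNIV. M$x$y * (if x = y then u else u^2)) =
        (\<Sum>y\<in>UNIV. u^2 * M$x$y + (if x = y then (u - u^2) * M$x$y else 0))"
      by (rule sum.cong) (auto simp: algebra_simps)
    then show "(\<Sum>y\<in>UNIV. M$x$y * (if x = y then u else u^2))
        = u^2 * (\<Sum>y\<in>UNIV. M$x$y) + (u - u^2) * M$x$x"
      by (simp add: sum.distrib sum_distrib_left)
  qed
  also have "\<dots> = u^2 * entry_sum M + (u - u^2) * trace M"
    by (simp add: sum.distrib sum_distrib_left entry_sum_def trace_def)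
  finally show ?thesis .
qed

(* The increments of (1/N) S_beta along the orbit of J are 2u(1-u)/N^2 * g n:
   the entry-sum part of S_beta is constant, and the trace grows by (2/N) g n. *)
lemma S_beta_increment:
  fixes Q :: "'e::finite \<Rightarrow> 'e \<Rightarrow> real"
  assumes "large_sym_stochastic (rmat Q)" and "trace (rmat Q) = 0"
  shows "S_beta u ((L0 Q ^^ (n + 1)) Jm) / complex_of_real (real CARD('e))
      - S_beta u ((L0 Q ^^ n) Jm) / complex_of_real (real CARD('e))
    = complex_of_real (2 * u * (1 - u) / (real CARD('e))^2 * gseq (rmat Q) n)"
proof -
  interpret large_sym_stochastic "rmat Q" by (rule assms(1))
  let ?N = "real CARD('e)" and ?C = "\<lambda>n. (Lreal (rmat Q) ^^ n) Jmat"
  let ?S = "\<lambda>n. u^2 * entry_sum (?C n) + (u - u^2) * trace (?C n)"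
  have sum_const: "entry_sum (?C n) = entry_sum (Jmat :: 'e rmat)" for n
    by (induction n) (simp_all add: entry_sum_Lreal)
  have trace_step: "trace (?C (Suc n)) = trace (?C n) + (2 / ?N) * gseq (rmat Q) n"
    by (simp add: gseq_def trace_Lreal[OF assms(2)])
  have real_identity: "?S (Suc n) / ?N - ?S n / ?N = 2 * u * (1 - u) / ?N^2 * gseq (rmat Q) n"
    unfolding trace_step sum_const using card_pos by (simp add: field_simps power2_eq_square)
  have as_real: "S_beta u ((L0 Q ^^ k) Jm) / complex_of_real ?N = complex_of_real (?S k / ?N)" for k
    by (simp add: L0_iter_Jm S_beta_cmat)
  show ?thesis
    using real_identity by (simp only: as_real Suc_eq_plus1 of_real_diff[symmetric])
qed

lemma linear_le_geometric:
  fixes e N :: real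
  assumes "0 < e" "e \<le> 8" "e < N"
  shows "1 + 8 * real n / N \<le> (8 / e) * (1 / (1 - e / N)) ^ n"
proof -
  have s_pos: "0 < 1 - e / N" using assms by (simp add: field_simps)
  have "0 \<le> e / N" using assms by simp
  then have "1 + real n * (e / N) \<le> (1 + e / N) ^ n"
    by (intro Bernoulli_inequality) linarith
  also have "\<dots> \<le> (1 / (1 - e / N)) ^ n"
  proof (rule power_mono)
    have "(1 + e / N) * (1 - e / N) \<le> 1" by (simp add: algebra_simps)
    then show "1 + e / N \<le> 1 / (1 - e / N)" using s_pos by (simp add: field_simps)
  qed (use assms in simp)
  finally have bernoulli: "1 + real n * (e / N) \<le> (1 / (1 - e / N)) ^ n" .
  have "1 + 8 * real n / N = (8 / e) * (e / 8 + real n * (e / N))"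
    using assms by (simp add: field_simps)
  also have "\<dots> \<le> (8 / e) * (1 + real n * (e / N))"
    using assms by (intro mult_left_mono) auto
  also have "\<dots> \<le> (8 / e) * (1 / (1 - e / N)) ^ n"
    using assms bernoulli by (intro mult_left_mono) auto
  finally show ?thesis .
qed

lemma S_beta_increment_bound:
  fixes Q :: "'e::finite \<Rightarrow> 'e \<Rightarrow> real"
  assumes "large_sym_stochastic (rmat Q)" and "trace (rmat Q) = 0"
    and "0 < \<epsilon>" "\<epsilon> \<le> 1" and "0 \<le> u" "u \<le> 1"
  shows "norm (S_beta u ((L0 Q ^^ (n + 1)) Jm) / complex_of_real (real CARD('e))
      - S_beta u ((L0 Q ^^ n) Jm) / complex_of_real (real CARD('e)))
    \<le> 2 * u * (1 - u) / (real CARD('e))^2 * (8 / \<epsilon>)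
      * (1 / (1 - \<epsilon> / real CARD('e))) ^ n"
proof -
  interpret large_sym_stochastic "rmat Q" by (rule assms(1))
  define c where "c = 2 * u * (1 - u) / (real CARD('e))^2"
  have c_nonneg: "0 \<le> c" using assms(5,6) by (simp add: c_def)
  have "\<bar>gseq (rmat Q) n\<bar> \<le> (8 / \<epsilon>) * (1 / (1 - \<epsilon> / real CARD('e))) ^ n"
    using gseq_bound[of n] linear_le_geometric[of \<epsilon> "real CARD('e)" n] assms(3,4) card_ge_8
    by linarith
  then have "c * \<bar>gseq (rmat Q) n\<bar> \<le> c * ((8 / \<epsilon>) * (1 / (1 - \<epsilon> / real CARD('e))) ^ n)"
    by (rule mult_left_mono[OF _ c_nonneg])
  then show ?thesis
    unfolding S_beta_increment[OF assms(1,2)] norm_of_real c_def[symmetric]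
    using c_nonneg by (simp add: abs_mult mult.assoc)
qed

lemma discounted_tail_bound:
  fixes a :: "nat \<Rightarrow> 'a::{banach, real_normed_div_algebra}"
  assumes a_bound: "\<And>n. norm (a n) \<le> K * x ^ n"
    and "0 \<le> \<rho>" "0 \<le> x" "\<rho> * x < 1"
  shows "norm (\<Sum>k. of_real (\<rho> ^ (k + n0)) * a (k + n0)) \<le> K * (\<rho> * x) ^ n0 / (1 - \<rho> * x)"
proof -
  define q where "q = \<rho> * x"
  have q: "0 \<le> q" "q < 1" using assms by (simp_all add: q_def)
  have term_bound: "norm (of_real (\<rho> ^ (k + n0)) * a (k + n0)) \<le> K * q ^ n0 * q ^ k" for k
  proof -
    have "norm (of_real (\<rho> ^ (k + n0)) * a (k + n0)) = \<rho> ^ (k + n0) * norm (a (k + n0))"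
      using assms(2) by (simp add: norm_mult norm_power)
    also have "\<dots> \<le> \<rho> ^ (k + n0) * (K * x ^ (k + n0))"
      using assms(2) a_bound by (intro mult_left_mono) auto
    also have "\<dots> = K * q ^ n0 * q ^ k"
      by (simp add: q_def power_mult_distrib power_add mult_ac)
    finally show ?thesis .
  qed
  have geometric: "summable (\<lambda>k. K * q ^ n0 * q ^ k)"
    using q by (intro summable_mult summable_geometric) simp
  have summable_norms: "summable (\<lambda>k. norm (of_real (\<rho> ^ (k + n0)) * a (k + n0)))"
    by (rule summable_comparison_test[OF _ geometric]) (use term_bound in auto)
  have "norm (\<Sum>k. of_real (\<rho> ^ (k + n0)) * a (k + n0))
      \<le> (\<Sum>k. norm (of_real (\<rho> ^ (k + n0)) * a (k + n0)))"
    by (rule summable_norm[OF summable_norms])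
  also have "\<dots> \<le> (\<Sum>k. K * q ^ n0 * q ^ k)"
    by (rule suminf_le[OF term_bound summable_norms geometric])
  also have "\<dots> = K * q ^ n0 / (1 - q)"
    using q by (simp add: suminf_mult suminf_geometric summable_geometric)
  finally show ?thesis by (simp add: q_def)
qed

lemma C_eps_ge: assumes "0 < e" shows "8 / e \<le> C_eps e"
proof -
  define A where "A = 2 / e + 9 + pi + 32 * sqrt 2 / sqrt (1 - cos 1)"
  have "0 \<le> 2 / e" "0 \<le> 32 * sqrt 2 / sqrt (1 - cos 1)" using assms by simp_all
  then have "A \<ge> 2 * pi" using pi_less_4 unfolding A_def by linarith
  then have "A / pi \<ge> 2" using pi_gt_zero by (simp add: field_simps)
  moreover have "(4 + e) / e \<ge> 4 / e" using assms by (simp add: divide_right_mono)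
  moreover have "4 / e \<ge> 0" using assms by simp
  ultimately have "A / pi * ((4 + e) / e) \<ge> 2 * (4 / e)"
    by (intro mult_mono) auto
  then show ?thesis by (simp add: C_eps_def A_def)
qed

lemma prefactor_identity:
  fixes N lam \<epsilon> u r :: real
  assumes "0 < \<epsilon>" "\<epsilon> < lam" "\<epsilon> < N" "0 < u" "u < 1" "lam * \<epsilon> < (lam - \<epsilon>) * N"
    and r_def: "r = (1 + lam / N) * (1 - \<epsilon> / N)"
  shows "lam * N^2 / (2 * u * (1 - u) * (N + lam))
      * (2 * u * (1 - u) / N^2 * (8 / \<epsilon>) * (1 / r) ^ n0 / (1 - 1 / r))
    = inverse (r ^ n0) * (8 / \<epsilon> * lam * (N - \<epsilon>) / ((lam - \<epsilon>) * N - lam * \<epsilon>))"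
proof -
  define D where "D = (lam - \<epsilon>) * N - lam * \<epsilon>"
  have nonzero: "N \<noteq> 0" "N + lam \<noteq> 0" "N - \<epsilon> \<noteq> 0" "u * (1 - u) \<noteq> 0" "D \<noteq> 0"
    using assms by (auto simp: D_def)
  have r: "r = (N + lam) * (N - \<epsilon>) / N^2"
    using nonzero by (simp add: r_def field_simps power2_eq_square)
  have "1 - 1 / r = ((N + lam) * (N - \<epsilon>) - N^2) / ((N + lam) * (N - \<epsilon>))"
    using nonzero by (simp add: r diff_divide_distrib)
  also have "(N + lam) * (N - \<epsilon>) - N^2 = D"
    by (simp add: D_def algebra_simps power2_eq_square)
  finally have geometric: "1 / (1 - 1 / r) = (N + lam) * (N - \<epsilon>) / D" by simp
  have prefactor: "lam * N^2 / (2 * u * (1 - u) * (N + lam)) * (2 * u * (1 - u) / N^2 * (8 / \<epsilon>))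
      = 8 * lam / (\<epsilon> * (N + lam))"
  proof -
    have "lam * N^2 / (2 * w * M) * (2 * w / N^2 * (8 / \<epsilon>)) = 8 * lam / (\<epsilon> * M)"
      if "w \<noteq> 0" "M \<noteq> 0" for w M
      using that nonzero assms(1) by (simp add: field_simps power2_eq_square)
    from this[of "u * (1 - u)" "N + lam"] show ?thesis using nonzero by (simp add: mult.assoc)
  qed
  have "lam * N^2 / (2 * u * (1 - u) * (N + lam))
      * (2 * u * (1 - u) / N^2 * (8 / \<epsilon>) * (1 / r) ^ n0 / (1 - 1 / r))
    = (lam * N^2 / (2 * u * (1 - u) * (N + lam)) * (2 * u * (1 - u) / N^2 * (8 / \<epsilon>)))
      * (1 / (1 - 1 / r)) * (1 / r) ^ n0"
    by (simp only: divide_inverse mult_ac)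
  also have "\<dots> = inverse (r ^ n0) * (8 / \<epsilon> * lam * (N - \<epsilon>) / D)"
  proof -
    have cancel: "8 * lam / (\<epsilon> * M) * (M * (N - \<epsilon>) / D) = 8 / \<epsilon> * lam * (N - \<epsilon>) / D"
      if "M \<noteq> 0" for M
      using that nonzero assms(1) by (simp add: field_simps)
    show ?thesis
      unfolding prefactor geometric cancel[OF nonzero(2)]
      by (simp add: power_one_over inverse_eq_divide)
  qed
  finally show ?thesis by (simp add: D_def)
qed

theorem lemma4p6:
  fixes Q :: "'e::finite \<Rightarrow> 'e \<Rightarrow> real"
    and \<epsilon> lam u :: real and m :: nat
  assumes N_gt: "CARD('e) > 8"
    and Q_stoch: "stochastic Q"
    and Q_irr: "irreducible_mat Q"
    and Q_sym: "\<forall>x y. Q x y = Q y x"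
    and Q_tr: "mtrace Q = 0"
    and eps: "0 < \<epsilon>" "\<epsilon> \<le> 1"
    and lam: "\<epsilon> < lam"
    and lamN: "(lam - \<epsilon>) * real CARD('e) > lam * \<epsilon>"
    and u: "0 < u" "u < 1"
  shows "(let N = real CARD('e) in
     norm (complex_of_real (lam * N^2 / (2 * u * (1 - u) * (N + lam))) *
       (\<Sum>k. (let n = k + m * CARD('e) + 1 in
           complex_of_real ((N / (N + lam)) ^ n) *
           (S_beta u ((L0 Q ^^ (n + 1)) Jm) / complex_of_real N
            - S_beta u ((L0 Q ^^ n) Jm) / complex_of_real N))))
     \<le> inverse (((1 + lam / N) * (1 - \<epsilon> / N)) ^ (m * CARD('e) + 1))
        * (C_eps \<epsilon> * lam * (N - \<epsilon>) / ((lam - \<epsilon>) * N - lam * \<epsilon>)))"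
proof -
  define N where "N = real CARD('e)"
  define n0 where "n0 = m * CARD('e) + 1"
  define r where "r = (1 + lam / N) * (1 - \<epsilon> / N)"
  define P where "P = lam * N^2 / (2 * u * (1 - u) * (N + lam))"
  define K where "K = 2 * u * (1 - u) / N^2 * (8 / \<epsilon>)"
  define a where "a n = S_beta u ((L0 Q ^^ (n + 1)) Jm) / complex_of_real N
      - S_beta u ((L0 Q ^^ n) Jm) / complex_of_real N" for n
  have N: "8 < N" using N_gt by (simp add: N_def)
  have walk: "large_sym_stochastic (rmat Q)"
    using large_sym_stochastic_rmat[OF Q_stoch Q_sym N_gt] .
  have a_bound: "norm (a n) \<le> K * (1 / (1 - \<epsilon> / N)) ^ n" for n
    unfolding a_def K_def N_def
    using S_beta_increment_bound[OF walk _ eps] Q_tr u by (simp add: trace_rmat)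
  have r_gt_1: "1 < r"
    using N eps lam lamN by (simp add: r_def N_def field_simps)
  have ratio: "N / (N + lam) * (1 / (1 - \<epsilon> / N)) = 1 / r"
    using N eps lam by (simp add: r_def field_simps)
  define T where "T = (\<Sum>k. of_real ((N / (N + lam)) ^ (k + n0)) * a (k + n0))"
  have tail: "norm T \<le> K * (1 / r) ^ n0 / (1 - 1 / r)"
    unfolding T_def using N eps lam r_gt_1
    by (intro discounted_tail_bound[OF a_bound, of "N / (N + lam)" n0, unfolded ratio]) simp_all
  have P_nonneg: "0 \<le> P" using N eps lam u by (simp add: P_def)
  have "norm (of_real P * T) = P * norm T" using P_nonneg by (simp add: norm_mult)
  also have "\<dots> \<le> P * (K * (1 / r) ^ n0 / (1 - 1 / r))"
    using tail P_nonneg by (rule mult_left_mono)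
  also have "\<dots> = inverse (r ^ n0) * (8 / \<epsilon> * lam * (N - \<epsilon>) / ((lam - \<epsilon>) * N - lam * \<epsilon>))"
    unfolding P_def K_def
    by (rule prefactor_identity) (use N eps lam lamN u in \<open>simp_all add: N_def r_def\<close>)
  also have "\<dots> \<le> inverse (r ^ n0) * (C_eps \<epsilon> * lam * (N - \<epsilon>) / ((lam - \<epsilon>) * N - lam * \<epsilon>))"
    using C_eps_ge[OF eps(1)] N eps lam lamN
    by (intro mult_left_mono divide_right_mono mult_right_mono) (simp_all add: r_def N_def)
  finally show ?thesis
    by (simp add: Let_def N_def n0_def r_def P_def T_def a_def add.assoc)
qed


end
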